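(* Let $t\ge0$ be an integer such that $q=4t+5$ is a prime power, let $s=t+1$, let $F_q$ be the field with $q$ elements, $C$ its set of nonzero squares, $V=F_q\times F_q$ and $X=\mathbb{P}(V)$ the projective line (of cardinality $q+1$). For a basis $(u,v)$ of $V$ let $\Gamma^u_v$ be the graph on $X^u=X\setminus\{\langle u\rangle\}$ in which $\langle \alpha u+v\rangle$ and $\langle\beta u+v\rangle$ ($\alpha,\beta\in F_q$) are adjacent iff $\alpha-\beta\in C$. Then for every basis $(u,v)$: 1. $\Gamma^u_v$ has diameter $2$, every vertex has exactly $(q-1)/2=2s$ neighbours, two adjacent vertices have exactly $t=s-1$ common neighbours, and two vertices at distance $2$ have exactly $s$ common neighbours. 2. Let $\widehat\Gamma$ be the graph on $X$ obtained from $\Gamma^u_v$ by adding $\langle u\rangle$ as an isolated vertex. Then the localized graph ${}^{\langle v\rangle}\widehat\Gamma$ has $\langle v\rangle$ isolated and induces $\Gamma^v_u$ on $X\setminus\{\langle v\rangle\}$. 3. (a) For every $\varphi\in GL_2(F_q)$ (acting on $X$ by $\langle w\rangle\mapsto\langle\varphi(w)\rangle$), $\varphi(\Gamma^u_v)=\Gamma^{\varphi(u)}_{\varphi(v)}$. (b) If moreover $\varphi$ stabilizes the line $\langle u\rangle$, then $\Gamma^{\varphi(u)}_{\varphi(v)}=\Gamma^u_v$ if $\det\varphi$ is a square in $F_q$, and otherwise $\Gamma^{\varphi(u)}_{\varphi(v)}$ is the complementary graph of $\Gamma^u_v$ on $X^u$. 4. The group $SL_2(F_q)$ has exactly two orbits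 on the set of graphs $\Gamma^{u'}_{v'}$ ($(u',v')$ ranging over the bases of $V$). The orbit of $\Gamma^u_v$ is the set of graphs obtained by localizing $\widehat\Gamma$ (as in 2) at a point $z\in X$ and deleting the isolated vertex $z$, for $z$ ranging over $X$.
   Context: For a simple graph $\Gamma$ on a finite set $X$, its matrix $\mathcal{E}=(\varepsilon_{i,j})$ has $\varepsilon_{i,j}=-1$ if $i\ne j$ are adjacent, $1$ otherwise. Two graphs on $X$ with matrices $\mathcal{E},\mathcal{E}'$ are associated if there are $\nu_i\in\{\pm1\}$ with $\varepsilon'_{i,j}=\nu_i\nu_j\varepsilon_{i,j}$ for all $i,j$. The localization ${}^z\Gamma$ of $\Gamma$ at $z\in X$ is the unique graph associated to $\Gamma$ in which $z$ is an isolated vertex. The complementary graph has the same vertices, its edges being the non-edges of the original graph. *)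

theory Defs
  imports "HOL-Analysis.Analysis" "HOL-Library.Extended_Nat"
begin

type_synonym 'v graph = "'v set \<times> ('v \<Rightarrow> 'v \<Rightarrow> bool)"

definition simple_graph_on :: "'v set \<Rightarrow> ('v \<Rightarrow> 'v \<Rightarrow> bool) \<Rightarrow> bool" where
  "simple_graph_on V E \<longleftrightarrow> (\<forall>x y. E x y \<longrightarrow> x \<in> V \<and> y \<in> V \<and> x \<noteq> y \<and> E y x)"

definition adj :: "'v graph \<Rightarrow> 'v \<Rightarrow> 'v \<Rightarrow> bool" where
  "adj G x y \<longleftrightarrow> x \<in> fst G \<and> y \<in> fst G \<and> snd G x y"

definition nbrs :: "'v graph \<Rightarrow> 'v \<Rightarrow> 'v set" where
  "nbrs G x = {y \<in> fst G. adj G x y}"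

definition common_nbrs :: "'v graph \<Rightarrow> 'v \<Rightarrow> 'v \<Rightarrow> 'v set" where
  "common_nbrs G x y = {z \<in> fst G. adj G x z \<and> adj G y z}"

definition graph_dist :: "'v graph \<Rightarrow> 'v \<Rightarrow> 'v \<Rightarrow> enat" where
  "graph_dist G x y =
     (if \<exists>n. (adj G ^^ n) x y then enat (LEAST n. (adj G ^^ n) x y) else \<infinity>)"

definition diameter :: "'v graph \<Rightarrow> enat" where
  "diameter G = (SUP x\<in>fst G. SUP y\<in>fst G. graph_dist G x y)"

definition induced :: "'v graph \<Rightarrow> 'v set \<Rightarrow> 'v graph" where
  "induced G W = (W, \<lambda>x y. x \<in> W \<and> y \<in> W \<and> adj G x y)"

definition delete_vertex :: "'v graph \<Rightarrow> 'v \<Rightarrow> 'v graph" where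
  "delete_vertex G z = induced G (fst G - {z})"

definition complement :: "'v graph \<Rightarrow> 'v graph" where
  "complement G = (fst G, \<lambda>x y. x \<in> fst G \<and> y \<in> fst G \<and> x \<noteq> y \<and> \<not> adj G x y)"

definition graph_image :: "('v \<Rightarrow> 'w) \<Rightarrow> 'v graph \<Rightarrow> 'w graph" where
  "graph_image f G = (f ` fst G, \<lambda>P Q. \<exists>x y. P = f x \<and> Q = f y \<and> adj G x y)"

definition eps :: "('v \<Rightarrow> 'v \<Rightarrow> bool) \<Rightarrow> 'v \<Rightarrow> 'v \<Rightarrow> int" where
  "eps E i j = (if i \<noteq> j \<and> E i j then -1 else 1)"

definition associated :: "'v set \<Rightarrow> ('v \<Rightarrow> 'v \<Rightarrow> bool) \<Rightarrow> ('v \<Rightarrow> 'v \<Rightarrow> bool) \<Rightarrow> bool" where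
  "associated V E E' \<longleftrightarrow> (\<exists>\<nu> :: 'v \<Rightarrow> int. (\<forall>i\<in>V. \<nu> i = 1 \<or> \<nu> i = -1) \<and>
      (\<forall>i\<in>V. \<forall>j\<in>V. eps E' i j = \<nu> i * \<nu> j * eps E i j))"

definition localize :: "'v graph \<Rightarrow> 'v \<Rightarrow> 'v graph" where
  "localize G z = (fst G, THE E'. simple_graph_on (fst G) E' \<and> associated (fst G) (adj G) E'
                                  \<and> (\<forall>y. \<not> E' z y))"

definition line :: "'a::field ^ 2 \<Rightarrow> ('a ^ 2) set" where
  "line w = {c *s w | c. True}"

definition projline :: "('a::field ^ 2) set set" where
  "projline = {line w | w. w \<noteq> 0}"

definition is_basis2 :: "'a::field ^ 2 \<Rightarrow> 'a ^ 2 \<Rightarrow> bool" where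
  "is_basis2 u v \<longleftrightarrow> (\<forall>w. \<exists>!ab. w = fst ab *s u + snd ab *s v)"

definition nonzero_squares :: "'a::field set" where
  "nonzero_squares = {c ^ 2 | c. c \<noteq> 0}"

definition Xu :: "'a::field ^ 2 \<Rightarrow> ('a ^ 2) set set" where
  "Xu u = projline - {line u}"

definition GammaAdj :: "'a::field ^ 2 \<Rightarrow> 'a ^ 2 \<Rightarrow> ('a ^ 2) set \<Rightarrow> ('a ^ 2) set \<Rightarrow> bool" where
  "GammaAdj u v P Q \<longleftrightarrow> (\<exists>\<alpha> \<beta>. P = line (\<alpha> *s u + v) \<and> Q = line (\<beta> *s u + v)
                           \<and> \<alpha> - \<beta> \<in> nonzero_squares)"

definition Gamma :: "'a::field ^ 2 \<Rightarrow> 'a ^ 2 \<Rightarrow> ('a ^ 2) set graph" where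
  "Gamma u v = (Xu u, GammaAdj u v)"

definition Gamma_hat :: "'a::field ^ 2 \<Rightarrow> 'a ^ 2 \<Rightarrow> ('a ^ 2) set graph" where
  "Gamma_hat u v = (projline, GammaAdj u v)"

definition proj_act :: "'a::field ^ 2 ^ 2 \<Rightarrow> ('a ^ 2) set \<Rightarrow> ('a ^ 2) set" where
  "proj_act \<phi> P = (\<lambda>w. \<phi> *v w) ` P"

definition GL2 :: "('a::field ^ 2 ^ 2) set" where
  "GL2 = {\<phi>. invertible \<phi>}"

definition SL2 :: "('a::field ^ 2 ^ 2) set" where
  "SL2 = {\<phi>. det \<phi> = 1}"

definition SL2_orbit :: "('a::field ^ 2) set graph \<Rightarrow> ('a ^ 2) set graph set" where
  "SL2_orbit G = {graph_image (proj_act \<phi>) G | \<phi>. \<phi> \<in> SL2}"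

end

(*
  Parametrizing X^u by the chart a |-> <a u + v> turns Gamma^u_v into the Paley graph of F_q:
  a ~ b iff chi(a - b) = 1 for the quadratic character chi, and q = 1 mod 4 makes -1 a square,
  so the relation is symmetric.  Its parameters come from counting consecutive squares and
  nonsquares, where z |-> 1/z exchanges the two mixed classes.

  Localizing at <v> switches with respect to the neighbourhood of <v>.  In the chart of X^v,
  related to that of X^u by a |-> 1/a, the identity chi(1/g - 1/d) = chi(g) chi(d) chi(g - d)
  shows that the switched graph is Gamma^v_u.

  A change of basis fixing the line <u> acts on the chart by an affine map multiplying
  differences by a scalar of character chi(det), so it keeps or complements the graph.  Hence the
  SL_2-orbit of Gamma^u_v consists of the Gamma^u'_v' with chi(det(u', v')) = chi(det(u, v)),
  there are two orbits, and localizing at <a u + v> gives Gamma^(a u + v)_u, whose determinant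
  has the same character.
*)

theory Submission
  imports Defs
begin

section \<open>Squares in finite fields of odd order\<close>

lemma even_card_if_involution:
  assumes "finite A" and "\<And>x. x \<in> A \<Longrightarrow> f x \<in> A \<and> f (f x) = x \<and> f x \<noteq> x"
  shows "even (card A)"
  using assms
proof (induction "card A" arbitrary: A rule: less_induct)
  case less
  show ?case
  proof (cases "A = {}")
    case False
    then obtain x where x: "x \<in> A" by blast
    let ?B = "A - {x, f x}"
    have fx: "f x \<in> A" "f x \<noteq> x" using less.prems x by auto
    have sub: "{x, f x} \<subseteq> A" and two: "card {x, f x} = 2" using x fx by auto
    have card_A: "card A = card ?B + 2"
      using card_Diff_subset[OF _ sub] card_mono[OF less.prems(1) sub] two by simp
    have "even (card ?B)"
    proof (rule less.hyps)
      show "card ?B < card A" "finite ?B" using card_A less.prems(1) by simp_all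
      fix y assume "y \<in> ?B"
      then show "f y \<in> ?B \<and> f (f y) = y \<and> f y \<noteq> y"
        using less.prems(2) x by (metis Diff_iff insert_iff singletonD)
    qed
    then show ?thesis using card_A by simp
  qed simp
qed

lemma two_neq_zero_if_odd_card:
  assumes "odd CARD('a::{field,finite})"
  shows "(2::'a) \<noteq> 0"
proof
  assume "(2::'a) = 0"
  then have "even (card (UNIV::'a set))"
    by (intro even_card_if_involution[where f="\<lambda>x. x + 1"]) (simp_all add: add.assoc)
  then show False using assms by simp
qed

lemma nonzero_squares_iff: "x \<in> nonzero_squares \<longleftrightarrow> (\<exists>c. c \<noteq> 0 \<and> x = c ^ 2)"
  by (auto simp: nonzero_squares_def)

lemma nonzero_squares_nonzero: "(x::'a::field) \<in> nonzero_squares \<Longrightarrow> x \<noteq> 0"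
  by (auto simp: nonzero_squares_iff)

lemma one_in_nonzero_squares: "(1::'a::field) \<in> nonzero_squares"
  by (auto simp: nonzero_squares_iff intro: exI[of _ 1])

lemma nonzero_squares_mult:
  "(x::'a::field) \<in> nonzero_squares \<Longrightarrow> y \<in> nonzero_squares \<Longrightarrow> x * y \<in> nonzero_squares"
  by (auto simp: nonzero_squares_iff) (metis mult_eq_0_iff power_mult_distrib)

lemma nonzero_squares_inverse:
  "(x::'a::field) \<in> nonzero_squares \<Longrightarrow> inverse x \<in> nonzero_squares"
  by (auto simp: nonzero_squares_iff) (metis inverse_nonzero_iff_nonzero power_inverse)

lemma nonzero_squares_cancel:
  assumes "(x::'a::field) \<in> nonzero_squares" "x * y \<in> nonzero_squares"
  shows "y \<in> nonzero_squares"
proof -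
  have "y = inverse x * (x * y)" using nonzero_squares_nonzero[OF assms(1)] by simp
  then show ?thesis by (metis assms nonzero_squares_inverse nonzero_squares_mult)
qed

lemma card_square_roots:
  assumes "odd CARD('a::{field,finite})" and "(c::'a) \<in> nonzero_squares"
  shows "card {y. y ^ 2 = c} = 2"
proof -
  obtain r where r: "r \<noteq> 0" "c = r ^ 2" using assms(2) unfolding nonzero_squares_iff by blast
  have "2 * r \<noteq> 0" using r(1) two_neq_zero_if_odd_card[OF assms(1)] by simp
  then have "r \<noteq> -r" by (metis eq_neg_iff_add_eq_0 mult_2)
  moreover have "{y. y ^ 2 = c} = {r, -r}" using r by (auto simp: power2_eq_iff)
  ultimately show ?thesis by simp
qed

lemma card_nonzero_squares:
  assumes "odd CARD('a::{field,finite})"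
  shows "CARD('a) - 1 = 2 * card (nonzero_squares :: 'a set)"
proof -
  have "UNIV - {0::'a} = (\<Union>c\<in>nonzero_squares. {y. y ^ 2 = c})"
    by (auto simp: nonzero_squares_iff)
  then have "card (UNIV - {0::'a}) = (\<Sum>c\<in>nonzero_squares. card {y::'a. y ^ 2 = c})"
    by (simp only:) (rule card_UN_disjoint, auto)
  also have "\<dots> = (\<Sum>c\<in>(nonzero_squares :: 'a set). 2)"
    by (rule sum.cong) (simp_all add: card_square_roots[OF assms])
  finally show ?thesis by (simp add: card_Diff_singleton)
qed

lemma nonsquare_mult_nonsquare:
  assumes odd: "odd CARD('a::{field,finite})"
    and x: "(x::'a) \<noteq> 0" "x \<notin> nonzero_squares" and y: "y \<noteq> 0" "y \<notin> nonzero_squares"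
  shows "x * y \<in> nonzero_squares"
proof -
  define N where "N = {z::'a. z \<noteq> 0 \<and> z \<notin> nonzero_squares}"
  have "N = (UNIV - {0::'a}) - nonzero_squares" by (auto simp: N_def)
  moreover have "nonzero_squares \<subseteq> UNIV - {0::'a}" by (auto dest: nonzero_squares_nonzero)
  ultimately have "card N = card (UNIV - {0::'a}) - card (nonzero_squares :: 'a set)"
    by (metis card_Diff_subset finite)
  then have card_N: "card N = card (nonzero_squares :: 'a set)"
    using card_nonzero_squares[OF odd] by (simp add: card_Diff_singleton)
  have sub: "(\<lambda>s. x * s) ` nonzero_squares \<subseteq> N"
  proof
    fix z assume "z \<in> (\<lambda>s. x * s) ` nonzero_squares"
    then obtain s where s: "s \<in> nonzero_squares" "z = x * s" by auto
    have "z \<notin> nonzero_squares"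
      using nonzero_squares_cancel[OF s(1)] x(2) s(2) by (metis mult.commute)
    then show "z \<in> N" using s x(1) nonzero_squares_nonzero by (auto simp: N_def)
  qed
  have "card ((\<lambda>s. x * s) ` nonzero_squares) = card (nonzero_squares :: 'a set)"
    by (rule card_image) (simp add: inj_on_def x(1))
  then have "(\<lambda>s. x * s) ` nonzero_squares = N"
    using card_N sub by (intro card_subset_eq) auto
  moreover have "y \<in> N" using y by (simp add: N_def)
  ultimately obtain s where s: "s \<in> nonzero_squares" "y = x * s" by blast
  have "x * y = x ^ 2 * s" using s(2) by (simp add: power2_eq_square)
  moreover have "x ^ 2 \<in> nonzero_squares" using x(1) by (auto simp: nonzero_squares_iff)
  ultimately show ?thesis using nonzero_squares_mult s(1) by simp
qed

lemma minus_one_in_nonzero_squares: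
  assumes q: "CARD('a::{field,finite}) mod 4 = 1"
  shows "(-1::'a) \<in> nonzero_squares"
proof (rule ccontr)
  assume minus_one: "(-1::'a) \<notin> nonzero_squares"
  have odd: "odd CARD('a)" using q by presburger
  \<comment> \<open>otherwise inversion would pair off the squares other than \<open>1\<close>, whose number is odd\<close>
  have "even (card (nonzero_squares - {1::'a}))"
  proof (rule even_card_if_involution[where f=inverse])
    fix x :: 'a assume x: "x \<in> nonzero_squares - {1}"
    have "inverse x \<noteq> x"
    proof
      assume "inverse x = x"
      then have "x * x = 1" using x nonzero_squares_nonzero by (metis DiffD1 right_inverse)
      then have "(x - 1) * (x + 1) = 0" by (simp add: algebra_simps)
      then have "x = 1 \<or> x = -1" by (auto simp flip: eq_neg_iff_add_eq_0)
      then show False using x minus_one by auto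
    qed
    then show "inverse x \<in> nonzero_squares - {1} \<and> inverse (inverse x) = x \<and> inverse x \<noteq> x"
      using x nonzero_squares_inverse by (auto simp: inverse_eq_1_iff)
  qed simp
  moreover have "card (nonzero_squares - {1::'a}) = card (nonzero_squares :: 'a set) - 1"
    by (simp add: one_in_nonzero_squares)
  moreover have "even (card (nonzero_squares :: 'a set))"
    using card_nonzero_squares[OF odd] q by presburger
  moreover have "card (nonzero_squares :: 'a set) > 0"
    using one_in_nonzero_squares by (auto simp: card_gt_0_iff)
  ultimately show False by simp
qed

section \<open>The quadratic character\<close>

definition qchar :: "'a::field \<Rightarrow> int" where
  "qchar x = (if x = 0 then 0 else if x \<in> nonzero_squares then 1 else -1)"

lemma qchar_0 [simp]: "qchar 0 = 0"
  by (simp add: qchar_def)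

lemma qchar_1 [simp]: "qchar 1 = 1"
  by (simp add: qchar_def one_in_nonzero_squares)

lemma qchar_eq_0_iff [simp]: "qchar x = 0 \<longleftrightarrow> x = 0"
  by (simp add: qchar_def)

lemma qchar_cases: "x \<noteq> 0 \<Longrightarrow> qchar x = 1 \<or> qchar x = -1"
  by (simp add: qchar_def)

lemma qchar_times_self: "x \<noteq> 0 \<Longrightarrow> qchar x * qchar x = 1"
  by (simp add: qchar_def)

lemma qchar_eq_1_iff: "qchar x = 1 \<longleftrightarrow> x \<in> nonzero_squares"
  by (auto simp: qchar_def dest: nonzero_squares_nonzero)

lemma qchar_eq_1_iff_square: "x \<noteq> 0 \<Longrightarrow> qchar x = 1 \<longleftrightarrow> (\<exists>c. x = c ^ 2)"
  by (auto simp: qchar_eq_1_iff nonzero_squares_iff)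

lemma qchar_mult:
  assumes odd: "odd CARD('a::{field,finite})"
  shows "qchar ((x::'a) * y) = qchar x * qchar y"
proof (cases "x = 0 \<or> y = 0")
  case False
  then have nz: "x \<noteq> 0" "y \<noteq> 0" by auto
  consider "x \<in> nonzero_squares" "y \<in> nonzero_squares"
    | "x \<in> nonzero_squares" "y \<notin> nonzero_squares"
    | "x \<notin> nonzero_squares" "y \<in> nonzero_squares"
    | "x \<notin> nonzero_squares" "y \<notin> nonzero_squares" by blast
  then show ?thesis
  proof cases
    case 1
    then show ?thesis using nonzero_squares_mult by (simp add: qchar_def nz)
  next
    case 2
    then have "x * y \<notin> nonzero_squares" using nonzero_squares_cancel by blast
    then show ?thesis using 2 nz by (simp add: qchar_def)
  next
    case 3
    then have "x * y \<notin> nonzero_squares" using nonzero_squares_cancel by (metis mult.commute)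
    then show ?thesis using 3 nz by (simp add: qchar_def)
  next
    case 4
    then have "x * y \<in> nonzero_squares" using nonsquare_mult_nonsquare[OF odd] nz by blast
    then show ?thesis using 4 nz by (simp add: qchar_def)
  qed
qed auto

lemma qchar_inverse:
  assumes "odd CARD('a::{field,finite})"
  shows "qchar (inverse (x::'a)) = qchar x"
proof (cases "x = 0")
  case False
  then have "qchar x * qchar (inverse x) = 1" by (simp flip: qchar_mult[OF assms])
  then show ?thesis using qchar_cases[OF False] by auto
qed simp

lemma qchar_divide:
  assumes "odd CARD('a::{field,finite})"
  shows "qchar ((x::'a) / y) = qchar x * qchar y"
  by (simp add: divide_inverse qchar_mult[OF assms] qchar_inverse[OF assms])

lemma qchar_uminus:
  assumes "CARD('a::{field,finite}) mod 4 = 1"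
  shows "qchar (- (x::'a)) = qchar x"
proof -
  have odd: "odd CARD('a)" using assms by presburger
  have "qchar (-1::'a) = 1"
    using minus_one_in_nonzero_squares[OF assms] by (simp add: qchar_eq_1_iff)
  then show ?thesis using qchar_mult[OF odd, of "-1" x] by simp
qed

lemma qchar_inverse_diff:
  assumes q: "CARD('a::{field,finite}) mod 4 = 1" and "(a::'a) \<noteq> 0" "b \<noteq> 0"
  shows "qchar (inverse a - inverse b) = qchar a * qchar b * qchar (a - b)"
proof -
  have odd: "odd CARD('a)" using q by presburger
  have "inverse a - inverse b = - (a - b) / (a * b)" using assms(2,3) by (simp add: field_simps)
  then have "qchar (inverse a - inverse b) = qchar (- (a - b)) * (qchar a * qchar b)"
    by (simp only: qchar_divide[OF odd] qchar_mult[OF odd])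
  then have "qchar (inverse a - inverse b) = qchar (a - b) * (qchar a * qchar b)"
    by (simp only: qchar_uminus[OF q])
  then show ?thesis by (simp add: mult_ac)
qed

lemma card_qchar_eq_1:
  assumes "odd CARD('a::{field,finite})"
  shows "CARD('a) - 1 = 2 * card {z::'a. qchar z = 1}"
  using card_nonzero_squares[OF assms] by (simp add: qchar_eq_1_iff)

lemma card_qchar_eq_minus_1:
  assumes "odd CARD('a::{field,finite})"
  shows "CARD('a) - 1 = 2 * card {z::'a. qchar z = -1}"
proof -
  have "{z::'a. qchar z = -1} = (UNIV - {0}) - {z. qchar z = 1}"
    using qchar_cases by auto
  moreover have "{z::'a. qchar z = 1} \<subseteq> UNIV - {0}" by auto
  ultimately have "card {z::'a. qchar z = -1} = card (UNIV - {0::'a}) - card {z::'a. qchar z = 1}"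
    by (metis card_Diff_subset finite)
  then have "card {z::'a. qchar z = -1} = (CARD('a) - 1) - card {z::'a. qchar z = 1}"
    by (simp add: card_Diff_singleton)
  then show ?thesis using card_qchar_eq_1[OF assms] by simp
qed

lemma card_field_ge_2: "CARD('a::{field,finite}) \<ge> 2"
proof -
  have "card {0::'a, 1} \<le> CARD('a)" by (rule card_mono) simp_all
  then show ?thesis by simp
qed

lemma exists_nonsquare:
  assumes "odd CARD('a::{field,finite})"
  shows "\<exists>n::'a. qchar n = -1"
proof -
  have "card {z::'a. qchar z = -1} > 0"
    using card_qchar_eq_minus_1[OF assms] card_field_ge_2[where 'a='a] by linarith
  then have "{z::'a. qchar z = -1} \<noteq> {}" by (simp add: card_gt_0_iff)
  then show ?thesis by blast
qed

lemma card_qchar_consecutive: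
  assumes q: "CARD('a::{field,finite}) mod 4 = 1"
  shows "4 * card {z::'a. qchar z = 1 \<and> qchar (z - 1) = 1} + 5 = CARD('a)"
    and "4 * card {z::'a. qchar z = -1 \<and> qchar (z - 1) = -1} + 1 = CARD('a)"
proof -
  have odd: "odd CARD('a)" using q by presburger
  define A where "A = {z::'a. qchar z = 1 \<and> qchar (z - 1) = 1}"
  define D where "D = {z::'a. qchar z = -1 \<and> qchar (z - 1) = 1}"
  define M where "M = {z::'a. qchar z = -1 \<and> qchar (z - 1) = -1}"
  have "{z::'a. qchar (z - 1) = 1} = (\<lambda>s. s + 1) ` {z. qchar z = 1}"
    by (auto simp: image_iff) (metis diff_add_cancel)
  then have "card {z::'a. qchar (z - 1) = 1} = card {z::'a. qchar z = 1}"
    by (simp add: card_image inj_on_def)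
  moreover have "{z::'a. qchar (z - 1) = 1} = insert 0 (A \<union> D)"
  proof -
    have "qchar (0 - 1 :: 'a) = 1" using qchar_uminus[OF q, of 1] by simp
    moreover have "qchar z = 1 \<or> qchar z = -1" if "z \<noteq> 0" for z :: 'a
      using qchar_cases[OF that] .
    ultimately show ?thesis unfolding A_def D_def by auto
  qed
  moreover have "card (insert 0 (A \<union> D)) = 1 + card A + card D"
  proof -
    have "0 \<notin> A \<union> D" "A \<inter> D = {}" by (simp_all add: A_def D_def) auto
    then show ?thesis by (simp add: card_Un_disjoint)
  qed
  ultimately have AD: "1 + card A + card D = card {z::'a. qchar z = 1}" by simp
  have "{z::'a. qchar z = -1} = D \<union> M"
  proof -
    have "qchar (z - 1) = 1 \<or> qchar (z - 1) = -1" if "qchar z = -1" for z :: 'a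
    proof -
      have "z \<noteq> 1" using that by auto
      then show ?thesis using qchar_cases[of "z - 1"] by simp
    qed
    then show ?thesis unfolding D_def M_def by auto
  qed
  moreover have "D \<inter> M = {}" by (auto simp: D_def M_def)
  ultimately have DM: "card D + card M = card {z::'a. qchar z = -1}"
    by (simp add: card_Un_disjoint)
  \<comment> \<open>Inversion exchanges \<open>D\<close> and \<open>M\<close>, since \<open>1/z - 1 = -(z - 1)/z\<close>.\<close>
  have inverse_minus_one: "qchar (inverse z - 1) = qchar (z - 1) * qchar z" if "z \<noteq> 0" for z :: 'a
  proof -
    have "inverse z - 1 = - (z - 1) / z" using that by (simp add: field_simps)
    then have "qchar (inverse z - 1) = qchar (- (z - 1)) * qchar z"
      by (simp only: qchar_divide[OF odd])
    then show ?thesis by (simp only: qchar_uminus[OF q])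
  qed
  have "card M \<le> card D"
  proof (rule card_inj_on_le[where f=inverse])
    show "inverse ` M \<subseteq> D"
    proof
      fix y assume "y \<in> inverse ` M"
      then obtain z where z: "z \<in> M" "y = inverse z" by blast
      have "z \<noteq> 0" using z by (auto simp: M_def)
      then show "y \<in> D" using z inverse_minus_one[of z] by (auto simp: M_def D_def qchar_inverse[OF odd])
    qed
  qed (simp_all add: inj_on_def)
  moreover have "card D \<le> card M"
  proof (rule card_inj_on_le[where f=inverse])
    show "inverse ` D \<subseteq> M"
    proof
      fix y assume "y \<in> inverse ` D"
      then obtain z where z: "z \<in> D" "y = inverse z" by blast
      have "z \<noteq> 0" using z by (auto simp: D_def)
      then show "y \<in> M" using z inverse_minus_one[of z] by (auto simp: M_def D_def qchar_inverse[OF odd])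
    qed
  qed (simp_all add: inj_on_def)
  ultimately have "card M = card D" by simp
  moreover have "CARD('a) > 0" by simp
  ultimately show "4 * card A + 5 = CARD('a)" "4 * card M + 1 = CARD('a)"
    using AD DM card_qchar_eq_1[OF odd] card_qchar_eq_minus_1[OF odd] by linarith+
qed

lemma card_common_qchar_differences:
  assumes odd: "odd CARD('a::{field,finite})" and ab: "(a::'a) \<noteq> b"
  shows "card {g. qchar (a - g) = 1 \<and> qchar (b - g) = 1}
       = card {z::'a. qchar z = qchar (a - b) \<and> qchar (z - 1) = qchar (a - b)}"
proof -
  define d where "d = a - b"
  have d: "d \<noteq> 0" using ab by (simp add: d_def)
  have scaled: "qchar (d * w) = 1 \<longleftrightarrow> qchar w = qchar d" for w
    using qchar_cases[OF d] by (auto simp: qchar_mult[OF odd])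
  define R where "R = {z::'a. qchar z = qchar d \<and> qchar (z - 1) = qchar d}"
  \<comment> \<open>The substitution \<open>g = a - d z\<close> turns \<open>a - g, b - g\<close> into \<open>d z, d (z - 1)\<close>.\<close>
  have "{g. qchar (a - g) = 1 \<and> qchar (b - g) = 1} = (\<lambda>z. a - d * z) ` R"
  proof (rule set_eqI, rule iffI)
    fix g assume g: "g \<in> {g. qchar (a - g) = 1 \<and> qchar (b - g) = 1}"
    define z where "z = (a - g) / d"
    have "a - g = d * z" using d by (simp add: z_def)
    moreover have "b - g = d * (z - 1)" using d by (simp add: z_def d_def field_simps)
    ultimately have "z \<in> R" using g scaled by (simp add: R_def)
    moreover have "g = a - d * z" using \<open>a - g = d * z\<close> by (simp add: algebra_simps)
    ultimately show "g \<in> (\<lambda>z. a - d * z) ` R" by blast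
  next
    fix g assume "g \<in> (\<lambda>z. a - d * z) ` R"
    then obtain z where z: "z \<in> R" "g = a - d * z" by blast
    have "a - g = d * z" "b - g = d * (z - 1)" using z(2) by (simp_all add: d_def algebra_simps)
    then show "g \<in> {g. qchar (a - g) = 1 \<and> qchar (b - g) = 1}"
      using z(1) scaled by (simp add: R_def)
  qed
  moreover have "inj_on (\<lambda>z. a - d * z) R" using d by (simp add: inj_on_def)
  ultimately show ?thesis by (simp add: card_image R_def d_def)
qed

section \<open>Graph distance and localization\<close>

lemma relpowp_2_iff: "(R ^^ 2) x y \<longleftrightarrow> (\<exists>z. R x z \<and> R z y)"
  by (auto simp: numeral_2_eq_2 relcompp_apply)

lemma graph_dist_eqI:
  assumes "(adj G ^^ n) x y" and "\<And>m. m < n \<Longrightarrow> \<not> (adj G ^^ m) x y"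
  shows "graph_dist G x y = enat n"
proof -
  have "(LEAST n. (adj G ^^ n) x y) = n"
    by (rule Least_equality) (use assms not_less in auto)
  then show ?thesis using assms(1) unfolding graph_dist_def by auto
qed

lemma graph_dist_refl: "graph_dist G x x = 0"
  using graph_dist_eqI[where G=G and n=0 and x=x and y=x] by (simp add: zero_enat_def)

lemma graph_dist_eq_1:
  assumes "adj G x y" "x \<noteq> y"
  shows "graph_dist G x y = 1"
  using graph_dist_eqI[where G=G and n=1 and x=x and y=y] assms
  by (simp add: one_enat_def relcompp_apply)

lemma graph_dist_eq_2:
  assumes "adj G x z" "adj G z y" "\<not> adj G x y" "x \<noteq> y"
  shows "graph_dist G x y = 2"
proof -
  have "(adj G ^^ 2) x y" using assms(1,2) relpowp_2_iff by metis
  moreover have "\<not> (adj G ^^ m) x y" if "m < 2" for m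
  proof -
    have "m = 0 \<or> m = 1" using that by auto
    then show ?thesis using assms(3,4) by auto
  qed
  ultimately have "graph_dist G x y = enat 2" by (rule graph_dist_eqI)
  then show ?thesis by (simp add: numeral_eq_enat)
qed

lemma eps_cases: "eps E i j = 1 \<or> eps E i j = -1"
  by (simp add: eps_def)

lemma eps_times_self: "eps E i j * eps E i j = 1"
  by (simp add: eps_def)

lemma eps_refl [simp]: "eps E i i = 1"
  by (simp add: eps_def)

lemma eps_commute: "(\<And>x y. E x y \<Longrightarrow> E y x) \<Longrightarrow> eps E i j = eps E j i"
  by (auto simp: eps_def)

lemma eps_eq_minus_1_iff: "i \<noteq> j \<Longrightarrow> eps E i j = -1 \<longleftrightarrow> E i j"
  by (simp add: eps_def)

text \<open>Switching \<open>G\<close> with respect to the neighbourhood of \<open>z\<close>, i.e.\ with the signs \<open>\<nu> i = \<epsilon> i z\<close>.\<close>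

definition switch_at :: "'v graph \<Rightarrow> 'v \<Rightarrow> 'v \<Rightarrow> 'v \<Rightarrow> bool" where
  "switch_at G z x y \<longleftrightarrow> x \<in> fst G \<and> y \<in> fst G \<and> x \<noteq> y \<and>
     eps (adj G) x z * eps (adj G) y z * eps (adj G) x y = -1"

lemma switch_at_is_localization:
  assumes sym: "\<And>x y. adj G x y \<Longrightarrow> adj G y x"
  shows "simple_graph_on (fst G) (switch_at G z) \<and> associated (fst G) (adj G) (switch_at G z)
      \<and> (\<forall>y. \<not> switch_at G z z y)"
proof (intro conjI allI)
  have esym: "eps (adj G) i j = eps (adj G) j i" for i j using sym by (rule eps_commute)
  show "simple_graph_on (fst G) (switch_at G z)"
    unfolding simple_graph_on_def switch_at_def using esym by (auto simp: mult_ac)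
  show "associated (fst G) (adj G) (switch_at G z)"
    unfolding associated_def
  proof (intro exI[where x="\<lambda>i. eps (adj G) i z"] conjI ballI)
    fix i j assume "i \<in> fst G" "j \<in> fst G"
    then show "eps (switch_at G z) i j = eps (adj G) i z * eps (adj G) j z * eps (adj G) i j"
      using eps_cases[of "adj G" i z] eps_cases[of "adj G" j z] eps_cases[of "adj G" i j]
      by (cases "i = j") (auto simp: eps_def switch_at_def)
  qed (rule eps_cases)
  fix y show "\<not> switch_at G z z y"
    using esym[of y z] eps_times_self[of "adj G" z y] by (simp add: switch_at_def)
qed

lemma localization_unique:
  assumes z: "z \<in> V"
    and simple: "simple_graph_on V E'" and assoc: "associated V E E'" and iso: "\<forall>y. \<not> E' z y"
  shows "E' x y \<longleftrightarrow> x \<in> V \<and> y \<in> V \<and> x \<noteq> y \<and> eps E x z * eps E y z * eps E x y = -1"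
proof -
  obtain \<nu> where \<nu>: "\<forall>i\<in>V. \<nu> i = 1 \<or> \<nu> i = -1"
      "\<forall>i\<in>V. \<forall>j\<in>V. eps E' i j = \<nu> i * \<nu> j * eps E i j"
    using assoc unfolding associated_def by blast
  have \<nu>_sq: "\<nu> z * \<nu> z = 1" using \<nu>(1) z by auto
  \<comment> \<open>Isolating \<open>z\<close> forces \<open>\<nu> i = \<nu> z \<epsilon> i z\<close>.\<close>
  have \<nu>_eq: "\<nu> i = \<nu> z * eps E i z" if i: "i \<in> V" for i
  proof -
    have "eps E' i z = 1"
      using iso simple unfolding simple_graph_on_def by (cases "i = z") (auto simp: eps_def)
    then have h: "\<nu> i * \<nu> z * eps E i z = 1" using \<nu>(2) i z by simp
    have "\<nu> i = \<nu> i * ((\<nu> z * \<nu> z) * (eps E i z * eps E i z))"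
      using \<nu>_sq eps_times_self[of E i z] by simp
    also have "\<dots> = (\<nu> i * \<nu> z * eps E i z) * (\<nu> z * eps E i z)" by (simp add: mult_ac)
    finally show ?thesis using h by simp
  qed
  show ?thesis
  proof (cases "x \<in> V \<and> y \<in> V \<and> x \<noteq> y")
    case True
    have "eps E' x y = (\<nu> z * \<nu> z) * (eps E x z * eps E y z * eps E x y)"
      using \<nu>(2) \<nu>_eq True by (simp add: mult_ac)
    then show ?thesis using True \<nu>_sq eps_eq_minus_1_iff[of x y E'] by auto
  next
    case False
    then show ?thesis using simple unfolding simple_graph_on_def by blast
  qed
qed

lemma adj_localize:
  assumes z: "z \<in> fst G" and sym: "\<And>x y. adj G x y \<Longrightarrow> adj G y x"
  shows "adj (localize G z) = switch_at G z"
proof -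
  have "(THE E'. simple_graph_on (fst G) E' \<and> associated (fst G) (adj G) E' \<and> (\<forall>y. \<not> E' z y))
      = switch_at G z"
  proof (rule the_equality)
    fix E' assume "simple_graph_on (fst G) E' \<and> associated (fst G) (adj G) E' \<and> (\<forall>y. \<not> E' z y)"
    then show "E' = switch_at G z"
      using localization_unique[OF z] by (auto simp: fun_eq_iff switch_at_def)
  qed (rule switch_at_is_localization[OF sym])
  then show ?thesis by (auto simp: fun_eq_iff adj_def localize_def switch_at_def)
qed

lemma fst_localize: "fst (localize G z) = fst G"
  by (simp add: localize_def)

lemma localize_isolated:
  assumes "z \<in> fst G" and "\<And>x y. adj G x y \<Longrightarrow> adj G y x"
  shows "\<not> adj (localize G z) z y"
  using switch_at_is_localization[OF assms(2)] adj_localize[OF assms] by simp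

section \<open>Bases of \<open>F\<^sup>2\<close> and the projective line\<close>

definition det2 :: "'a::field ^ 2 \<Rightarrow> 'a ^ 2 \<Rightarrow> 'a" where
  "det2 u v = u$1 * v$2 - u$2 * v$1"

lemma vec2_eq_iff: "(x::'a ^ 2) = y \<longleftrightarrow> x$1 = y$1 \<and> x$2 = y$2"
  by (simp add: vec_eq_iff forall_2)

lemma matrix_vector_mult_2: "((A::'a::semiring_1 ^ 2 ^ 2) *v w)$i = A$i$1 * w$1 + A$i$2 * w$2"
  by (simp add: matrix_vector_mult_def sum_2)

lemma det2_lincomb: "det2 (a *s u + b *s v) (c *s u + d *s v) = (a * d - b * c) * det2 u v"
  by (simp add: det2_def algebra_simps)

lemma det2_swap: "det2 v u = - det2 u v"
  by (simp add: det2_def algebra_simps)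

lemma det2_matrix_vector_mult: "det2 ((A::'a::field ^ 2 ^ 2) *v u) (A *v v) = det A * det2 u v"
  by (simp add: det2_def matrix_vector_mult_2 det_2 algebra_simps)

lemma is_basis2_lincomb_eq_0:
  assumes "is_basis2 u v" "a *s u + b *s v = 0"
  shows "a = 0 \<and> b = 0"
proof -
  have "0 = fst (a, b) *s u + snd (a, b) *s v" "0 = fst (0, 0) *s u + snd (0, 0) *s v"
    using assms(2) by simp_all
  then have "(a, b) = (0, 0)" using assms(1) unfolding is_basis2_def by blast
  then show ?thesis by simp
qed

lemma is_basis2_obtain:
  assumes "is_basis2 u v"
  obtains a b where "w = a *s u + b *s v"
  using assms unfolding is_basis2_def by (metis prod.collapse)

lemma is_basis2_iff_det2: "is_basis2 (u::'a::field ^ 2) v \<longleftrightarrow> det2 u v \<noteq> 0"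
proof
  assume b: "is_basis2 u v"
  show "det2 u v \<noteq> 0"
  proof
    assume d: "det2 u v = 0"
    have z2: "v$2 *s u + (- u$2) *s v = 0" and z1: "v$1 *s u + (- u$1) *s v = 0"
      using d by (simp_all add: vec2_eq_iff det2_def algebra_simps)
    have "u$2 = 0" "u$1 = 0"
      using is_basis2_lincomb_eq_0[OF b z2] is_basis2_lincomb_eq_0[OF b z1] by simp_all
    then have "u = 0" by (simp add: vec2_eq_iff)
    then have "(1::'a) = 0 \<and> (0::'a) = 0" by (intro is_basis2_lincomb_eq_0[OF b]) simp
    then show False by simp
  qed
next
  assume d: "det2 u v \<noteq> 0"
  show "is_basis2 u v" unfolding is_basis2_def
  proof
    fix w :: "'a ^ 2"
    \<comment> \<open>Cramer's rule\<close>
    let ?ab = "(det2 w v / det2 u v, det2 u w / det2 u v)"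
    show "\<exists>!ab. w = fst ab *s u + snd ab *s v"
    proof (rule ex1I[of _ ?ab])
      have cramer: "det2 w v * u$i + det2 u w * v$i = det2 u v * w$i" for i
        using exhaust_2[of i] by (auto simp: det2_def algebra_simps)
      have "det2 w v / det2 u v * u$i + det2 u w / det2 u v * v$i
          = (det2 w v * u$i + det2 u w * v$i) / det2 u v" for i
        by (simp add: add_divide_distrib)
      then show "w = fst ?ab *s u + snd ?ab *s v"
        using d by (simp add: vec_eq_iff cramer)
    next
      fix ab assume w: "w = fst ab *s u + snd ab *s v"
      have "det2 w v = fst ab * det2 u v" "det2 u w = snd ab * det2 u v"
        unfolding w by (simp_all add: det2_def algebra_simps)
      then show "ab = ?ab" using d by (simp add: prod_eq_iff)
    qed
  qed
qed

lemma exists_matrix_mapping_basis: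
  assumes "is_basis2 (u::'a::field ^ 2) v"
  shows "\<exists>A::'a ^ 2 ^ 2. A *v u = x \<and> A *v v = y"
proof -
  have d: "det2 u v \<noteq> 0" using assms is_basis2_iff_det2 by blast
  \<comment> \<open>the matrix with columns \<open>x, y\<close> times the inverse of the matrix with columns \<open>u, v\<close>\<close>
  define A :: "'a ^ 2 ^ 2" where
    "A = (\<chi> i j. if j = 1 then (x$i * v$2 - y$i * u$2) / det2 u v
                  else (y$i * u$1 - x$i * v$1) / det2 u v)"
  have A: "A$i$1 = (x$i * v$2 - y$i * u$2) / det2 u v" "A$i$2 = (y$i * u$1 - x$i * v$1) / det2 u v"
    for i by (simp_all add: A_def)
  have "(A *v u)$i = x$i * det2 u v / det2 u v" "(A *v v)$i = y$i * det2 u v / det2 u v" for i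
    by (simp_all add: matrix_vector_mult_2 A add_divide_distrib[symmetric] det2_def algebra_simps)
  then have "A *v u = x" "A *v v = y" using d by (simp_all add: vec_eq_iff)
  then show ?thesis by blast
qed

lemma line_scale: "(c::'a::field) \<noteq> 0 \<Longrightarrow> line (c *s w) = line w"
  unfolding line_def
  by (auto simp: vector_smult_assoc) (metis vector_smult_assoc divide_inverse_commute
      field_class.field_divide_inverse nonzero_divide_eq_eq)

lemma in_line_self: "w \<in> line (w::'a::field ^ 2)"
  unfolding line_def by (metis (mono_tags) mem_Collect_eq scaleR_one vector_smult_lid)

lemma line_eq_imp_scale: "line w = line (w'::'a::field ^ 2) \<Longrightarrow> \<exists>c. w' = c *s w"
  using in_line_self[of w'] unfolding line_def by auto

lemma proj_act_line: "proj_act (A::'a::field ^ 2 ^ 2) (line w) = line (A *v w)"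
  unfolding proj_act_def line_def
proof (intro set_eqI iffI)
  fix x assume "x \<in> (\<lambda>w. A *v w) ` {c *s w |c. True}"
  then show "x \<in> {c *s (A *v w) |c. True}" by (auto simp: vector_scalar_commute)
next
  fix x assume "x \<in> {c *s (A *v w) |c. True}"
  then obtain c where "x = A *v (c *s w)" by (auto simp: vector_scalar_commute)
  then show "x \<in> (\<lambda>w. A *v w) ` {c *s w |c. True}" by blast
qed

definition chart :: "'a::field ^ 2 \<Rightarrow> 'a ^ 2 \<Rightarrow> 'a \<Rightarrow> ('a ^ 2) set" where
  "chart u v a = line (a *s u + v)"

lemma chart_0: "chart u v 0 = line v"
  by (simp add: chart_def)

lemma chart_swap: "(g::'a::field) \<noteq> 0 \<Longrightarrow> chart v u g = chart u v (inverse g)"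
proof -
  assume g: "g \<noteq> 0"
  have "g *s v + u = g *s (inverse g *s u + v)" using g by (simp add: vec2_eq_iff algebra_simps)
  then show ?thesis unfolding chart_def using line_scale[OF g] by metis
qed

lemma proj_act_chart: "proj_act (A::'a::field ^ 2 ^ 2) (chart u v a) = chart (A *v u) (A *v v) a"
  by (simp add: chart_def proj_act_line matrix_vector_right_distrib vector_scalar_commute)

lemma chart_rescale:
  assumes "(n::'a::field) \<noteq> 0"
  shows "chart (l *s u) (m *s u + n *s v) x = chart u v ((x * l + m) / n)"
proof -
  have "x *s (l *s u) + (m *s u + n *s v) = n *s (((x * l + m) / n) *s u + v)"
    using assms by (simp add: vec2_eq_iff field_simps)
  then show ?thesis unfolding chart_def using line_scale[OF assms] by metis
qed

lemma chart_inject: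
  assumes "is_basis2 u v"
  shows "chart u v a = chart u v b \<longleftrightarrow> a = b"
proof
  assume "chart u v a = chart u v b"
  then obtain c where "b *s u + v = c *s (a *s u + v)"
    using line_eq_imp_scale unfolding chart_def by blast
  then have "(b - c * a) *s u + (1 - c) *s v = 0" by (simp add: vec2_eq_iff algebra_simps)
  then show "a = b" using is_basis2_lincomb_eq_0[OF assms, of "b - c * a" "1 - c"] by simp
qed simp

lemma chart_neq_line:
  assumes "is_basis2 u v"
  shows "chart u v a \<noteq> line u"
proof
  assume "chart u v a = line u"
  then obtain c where "a *s u + v = c *s u" using line_eq_imp_scale unfolding chart_def by metis
  then have "(a - c) *s u + 1 *s v = 0" by (simp add: vec2_eq_iff algebra_simps)
  then show False using is_basis2_lincomb_eq_0[OF assms, of "a - c" 1] by simp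
qed

lemma projline_eq_chart:
  assumes b: "is_basis2 (u::'a::field ^ 2) v"
  shows "projline = insert (line u) (range (chart u v))"
proof (intro set_eqI iffI)
  fix P :: "('a ^ 2) set" assume "P \<in> projline"
  then obtain w where w: "P = line w" "w \<noteq> 0" unfolding projline_def by blast
  obtain a c where ac: "w = a *s u + c *s v" using is_basis2_obtain[OF b] by blast
  show "P \<in> insert (line u) (range (chart u v))"
  proof (cases "c = 0")
    case True
    then have "w = a *s u" "a \<noteq> 0" using w(2) ac by (auto simp: vec2_eq_iff)
    then have "P = line u" using w(1) line_scale[of a u] by metis
    then show ?thesis by simp
  next
    case False
    have "w = c *s ((a / c) *s u + v)" using ac False by (simp add: vec2_eq_iff algebra_simps)
    then have "P = chart u v (a / c)" unfolding w(1) chart_def using line_scale[OF False] by metis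
    then show ?thesis by simp
  qed
next
  fix P assume "P \<in> insert (line u) (range (chart u v))"
  moreover have "u \<noteq> 0" "a *s u + v \<noteq> 0" for a
    using is_basis2_lincomb_eq_0[OF b, of 1 0] is_basis2_lincomb_eq_0[OF b, of a 1] by auto
  ultimately show "P \<in> projline" unfolding projline_def chart_def by blast
qed

lemma Xu_eq_range_chart:
  assumes "is_basis2 u v"
  shows "Xu u = range (chart u v)"
  using projline_eq_chart[OF assms] chart_neq_line[OF assms] unfolding Xu_def by auto

section \<open>The graphs \<open>\<Gamma>\<^sup>u\<^sub>v\<close> in a chart\<close>

lemma fst_Gamma: "fst (Gamma u v) = Xu u"
  by (simp add: Gamma_def)

lemma GammaAdj_iff_chart:
  "GammaAdj u v P Q \<longleftrightarrow> (\<exists>a b. P = chart u v a \<and> Q = chart u v b \<and> qchar (a - b) = 1)"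
  unfolding GammaAdj_def chart_def qchar_eq_1_iff by blast

lemma GammaAdj_chart:
  "is_basis2 u v \<Longrightarrow> GammaAdj u v (chart u v a) (chart u v b) \<longleftrightarrow> qchar (a - b) = 1"
  unfolding GammaAdj_iff_chart using chart_inject by metis

lemma adj_Gamma: "is_basis2 u v \<Longrightarrow> adj (Gamma u v) = GammaAdj u v"
  by (auto simp: fun_eq_iff adj_def Gamma_def Xu_eq_range_chart GammaAdj_iff_chart)

lemma adj_Gamma_hat: "is_basis2 u v \<Longrightarrow> adj (Gamma_hat u v) = GammaAdj u v"
  by (auto simp: fun_eq_iff adj_def Gamma_hat_def projline_eq_chart GammaAdj_iff_chart)

lemma GammaAdj_imp_Xu:
  assumes "is_basis2 u v" "GammaAdj u v P Q"
  shows "P \<in> Xu u \<and> Q \<in> Xu u \<and> P \<noteq> Q"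
  using assms chart_inject[OF assms(1)] by (auto simp: GammaAdj_iff_chart Xu_eq_range_chart)

lemma GammaAdj_sym:
  assumes "CARD('a::{field,finite}) mod 4 = 1" and "GammaAdj (u::'a ^ 2) v P Q"
  shows "GammaAdj u v Q P"
  using assms(2) qchar_uminus[OF assms(1)] unfolding GammaAdj_iff_chart by (metis minus_diff_eq)

section \<open>Strong regularity\<close>

lemma nbrs_Gamma_chart:
  assumes "is_basis2 u v"
  shows "nbrs (Gamma u v) (chart u v a) = chart u v ` {b. qchar (a - b) = 1}"
  using assms by (auto simp: nbrs_def fst_Gamma Xu_eq_range_chart adj_Gamma GammaAdj_chart)

lemma common_nbrs_Gamma_chart:
  assumes "is_basis2 u v"
  shows "common_nbrs (Gamma u v) (chart u v a) (chart u v b)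
       = chart u v ` {g. qchar (a - g) = 1 \<and> qchar (b - g) = 1}"
  using assms by (auto simp: common_nbrs_def fst_Gamma Xu_eq_range_chart adj_Gamma GammaAdj_chart)

lemma card_nbrs_Gamma:
  assumes odd: "odd CARD('a::{field,finite})" and b: "is_basis2 (u::'a ^ 2) v" and x: "x \<in> Xu u"
  shows "CARD('a) - 1 = 2 * card (nbrs (Gamma u v) x)"
proof -
  obtain a where a: "x = chart u v a" using x Xu_eq_range_chart[OF b] by auto
  have "card (nbrs (Gamma u v) x) = card {b. qchar (a - b) = 1}"
    unfolding a nbrs_Gamma_chart[OF b] using chart_inject[OF b] by (simp add: card_image inj_on_def)
  also have "{b. qchar (a - b) = 1} = (\<lambda>z. a - z) ` {z. qchar z = 1}"
  proof (intro set_eqI iffI)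
    fix x assume "x \<in> {b. qchar (a - b) = 1}"
    then show "x \<in> (\<lambda>z. a - z) ` {z. qchar z = 1}" by (intro image_eqI[of _ _ "a - x"]) simp_all
  qed auto
  also have "card \<dots> = card {z::'a. qchar z = 1}" by (simp add: card_image inj_on_def)
  finally show ?thesis using card_qchar_eq_1[OF odd] by simp
qed

lemma card_common_nbrs_Gamma:
  assumes odd: "odd CARD('a::{field,finite})" and b: "is_basis2 (u::'a ^ 2) v" and ab: "a \<noteq> b"
  shows "card (common_nbrs (Gamma u v) (chart u v a) (chart u v b))
       = card {z::'a. qchar z = qchar (a - b) \<and> qchar (z - 1) = qchar (a - b)}"
  unfolding common_nbrs_Gamma_chart[OF b] card_common_qchar_differences[OF odd ab, symmetric]
  using chart_inject[OF b] by (simp add: card_image inj_on_def)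

lemma graph_dist_Gamma_eq_2:
  assumes q: "CARD('a::{field,finite}) mod 4 = 1" and b: "is_basis2 (u::'a ^ 2) v"
    and ab: "a \<noteq> b" and nonadj: "qchar (a - b) \<noteq> 1"
  shows "graph_dist (Gamma u v) (chart u v a) (chart u v b) = 2"
proof -
  have odd: "odd CARD('a)" using q by presburger
  have "qchar (a - b) = -1" using nonadj qchar_cases[of "a - b"] ab by auto
  then have "4 * card (common_nbrs (Gamma u v) (chart u v a) (chart u v b)) + 1 = CARD('a)"
    using card_qchar_consecutive(2)[OF q] card_common_nbrs_Gamma[OF odd b ab] by simp
  then have "common_nbrs (Gamma u v) (chart u v a) (chart u v b) \<noteq> {}"
    using card_field_ge_2[where 'a='a] by auto
  then obtain z where "adj (Gamma u v) (chart u v a) z" "adj (Gamma u v) (chart u v b) z"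
    unfolding common_nbrs_def by blast
  moreover have "adj (Gamma u v) z (chart u v b)"
    using calculation(2) GammaAdj_sym[OF q] by (simp add: adj_Gamma[OF b])
  moreover have "\<not> adj (Gamma u v) (chart u v a) (chart u v b)"
    using nonadj by (simp add: adj_Gamma[OF b] GammaAdj_chart[OF b])
  moreover have "chart u v a \<noteq> chart u v b" using chart_inject[OF b] ab by blast
  ultimately show ?thesis using graph_dist_eq_2 by metis
qed

lemma diameter_Gamma:
  assumes q: "CARD('a::{field,finite}) mod 4 = 1" and b: "is_basis2 (u::'a ^ 2) v"
  shows "diameter (Gamma u v) = 2"
proof (rule antisym)
  have odd: "odd CARD('a)" using q by presburger
  have "graph_dist (Gamma u v) (chart u v a) (chart u v c) \<le> 2" for a c
  proof -
    consider "a = c" | "a \<noteq> c" "qchar (a - c) = 1" | "a \<noteq> c" "qchar (a - c) \<noteq> 1" by blast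
    then show ?thesis
    proof cases
      case 1
      then show ?thesis by (simp add: graph_dist_refl)
    next
      case 2
      then have "graph_dist (Gamma u v) (chart u v a) (chart u v c) = 1"
        using chart_inject[OF b] by (intro graph_dist_eq_1) (simp_all add: adj_Gamma[OF b] GammaAdj_chart[OF b])
      then show ?thesis by simp
    qed (simp add: graph_dist_Gamma_eq_2[OF q b])
  qed
  then show "diameter (Gamma u v) \<le> 2"
    unfolding diameter_def fst_Gamma Xu_eq_range_chart[OF b] by (auto intro!: SUP_least)
  obtain n :: 'a where n: "qchar n = -1" using exists_nonsquare[OF odd] by blast
  then have "n \<noteq> 0" "qchar (0 - n) \<noteq> 1" using qchar_uminus[OF q, of n] by auto
  then have "graph_dist (Gamma u v) (chart u v 0) (chart u v n) = 2"
    by (intro graph_dist_Gamma_eq_2[OF q b]) auto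
  moreover have "chart u v 0 \<in> Xu u" "chart u v n \<in> Xu u" using Xu_eq_range_chart[OF b] by auto
  ultimately show "2 \<le> diameter (Gamma u v)"
    unfolding diameter_def fst_Gamma by (metis SUP_upper2 order_refl)
qed

lemma Gamma_parameters:
  assumes q: "CARD('a::{field,finite}) = 4 * t + 5" and b: "is_basis2 (u::'a ^ 2) v"
  shows "diameter (Gamma u v) = 2
      \<and> (\<forall>x\<in>Xu u. card (nbrs (Gamma u v) x) = (CARD('a) - 1) div 2
                   \<and> card (nbrs (Gamma u v) x) = 2 * (t + 1))
      \<and> (\<forall>x\<in>Xu u. \<forall>y\<in>Xu u. adj (Gamma u v) x y
             \<longrightarrow> card (common_nbrs (Gamma u v) x y) = t)
      \<and> (\<forall>x\<in>Xu u. \<forall>y\<in>Xu u. graph_dist (Gamma u v) x y = 2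
             \<longrightarrow> card (common_nbrs (Gamma u v) x y) = t + 1)"
proof (intro conjI ballI impI)
  have q4: "CARD('a) mod 4 = 1" and odd: "odd CARD('a)" using q by presburger+
  show "diameter (Gamma u v) = 2" by (rule diameter_Gamma[OF q4 b])
  fix x assume "x \<in> Xu u"
  then have "CARD('a) - 1 = 2 * card (nbrs (Gamma u v) x)" by (rule card_nbrs_Gamma[OF odd b])
  then show "card (nbrs (Gamma u v) x) = (CARD('a) - 1) div 2"
    and "card (nbrs (Gamma u v) x) = 2 * (t + 1)"
    using q by simp_all
next
  have q4: "CARD('a) mod 4 = 1" and odd: "odd CARD('a)" using q by presburger+
  fix x y assume "x \<in> Xu u" "y \<in> Xu u"
  then obtain a c where xy: "x = chart u v a" "y = chart u v c" using Xu_eq_range_chart[OF b] by auto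
  {
    assume "adj (Gamma u v) x y"
    then have sq: "qchar (a - c) = 1" by (simp add: xy adj_Gamma[OF b] GammaAdj_chart[OF b])
    then have "a \<noteq> c" by auto
    then show "card (common_nbrs (Gamma u v) x y) = t"
      using card_common_nbrs_Gamma[OF odd b] card_qchar_consecutive(1)[OF q4] q xy sq by simp
  next
    assume dist: "graph_dist (Gamma u v) x y = 2"
    then have "a \<noteq> c" using xy graph_dist_refl[of "Gamma u v" x] by auto
    moreover have "qchar (a - c) \<noteq> 1"
    proof
      assume "qchar (a - c) = 1"
      then have "adj (Gamma u v) x y" by (simp add: xy adj_Gamma[OF b] GammaAdj_chart[OF b])
      moreover have "x \<noteq> y" using \<open>a \<noteq> c\<close> chart_inject[OF b] xy by blast
      ultimately show False using dist graph_dist_eq_1 by fastforce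
    qed
    ultimately have "qchar (a - c) = -1" using qchar_cases[of "a - c"] by auto
    then show "card (common_nbrs (Gamma u v) x y) = t + 1"
      using card_common_nbrs_Gamma[OF odd b \<open>a \<noteq> c\<close>] card_qchar_consecutive(2)[OF q4] q xy by simp
  }
qed

section \<open>Localizing \<open>\<Gamma>\<^sup>u\<^sub>v\<close> at \<open>\<langle>v\<rangle>\<close>\<close>

lemma fst_Gamma_hat: "fst (Gamma_hat u v) = projline"
  by (simp add: Gamma_hat_def)

lemma eps_Gamma_hat_line:
  assumes "is_basis2 u v"
  shows "eps (adj (Gamma_hat u v)) (line u) P = 1" and "eps (adj (Gamma_hat u v)) P (line u) = 1"
  using chart_neq_line[OF assms]
  by (auto simp: eps_def adj_Gamma_hat[OF assms] GammaAdj_iff_chart)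

lemma eps_Gamma_hat_chart:
  assumes b: "is_basis2 u v" and ab: "a \<noteq> b"
  shows "eps (adj (Gamma_hat u v)) (chart u v a) (chart u v b) = - qchar (a - b)"
  using chart_inject[OF b, of a b] ab qchar_cases[of "a - b"]
  by (auto simp: eps_def adj_Gamma_hat[OF b] GammaAdj_chart[OF b])

text \<open>In the chart of \<open>X\<^sup>v\<close>, the product of signs defining the localization at \<open>\<langle>v\<rangle>\<close> is the
  Paley sign again; the cases \<open>g = 0\<close> or \<open>d = 0\<close> are the vertex \<open>\<langle>u\<rangle>\<close>.\<close>

lemma switch_sign_Gamma_hat:
  assumes q: "CARD('a::{field,finite}) mod 4 = 1" and b: "is_basis2 (u::'a ^ 2) v" and gd: "g \<noteq> d"
  shows "eps (adj (Gamma_hat u v)) (chart v u g) (line v) * eps (adj (Gamma_hat u v)) (chart v u d) (line v)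
       * eps (adj (Gamma_hat u v)) (chart v u g) (chart v u d) = - qchar (g - d)"
proof -
  have odd: "odd CARD('a)" using q by presburger
  let ?e = "eps (adj (Gamma_hat u v))"
  have to_v: "?e (chart v u x) (line v) = - qchar x" if "x \<noteq> 0" for x
  proof -
    have "?e (chart v u x) (line v) = ?e (chart u v (inverse x)) (chart u v 0)"
      by (simp only: chart_swap[OF that] chart_0)
    also have "\<dots> = - qchar (inverse x - 0)" using that by (intro eps_Gamma_hat_chart[OF b]) simp
    finally show ?thesis by (simp add: qchar_inverse[OF odd])
  qed
  have u_is_0: "chart v u 0 = line u" by (rule chart_0)
  consider "g = 0" | "d = 0" | "g \<noteq> 0" "d \<noteq> 0" by blast
  then show ?thesis
  proof cases
    case 1
    then show ?thesis
      using gd to_v[of d] eps_Gamma_hat_line[OF b] by (simp add: u_is_0 qchar_uminus[OF q])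
  next
    case 2
    then show ?thesis using gd to_v[of g] eps_Gamma_hat_line[OF b] by (simp add: u_is_0)
  next
    case 3
    have "?e (chart v u g) (chart v u d) = ?e (chart u v (inverse g)) (chart u v (inverse d))"
      by (simp only: chart_swap[OF 3(1)] chart_swap[OF 3(2)])
    also have "\<dots> = - qchar (inverse g - inverse d)"
      using gd by (intro eps_Gamma_hat_chart[OF b]) simp
    finally have "?e (chart v u g) (chart v u d) = - (qchar g * qchar d * qchar (g - d))"
      using qchar_inverse_diff[OF q 3] by simp
    then show ?thesis
      using to_v 3 qchar_times_self[of g] qchar_times_self[of d]
      by (simp add: algebra_simps)
  qed
qed

lemma localize_Gamma_hat_at_v:
  assumes q: "CARD('a::{field,finite}) mod 4 = 1" and b: "is_basis2 (u::'a ^ 2) v"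
  shows "\<not> adj (localize (Gamma_hat u v) (line v)) (line v) y"
    and "induced (localize (Gamma_hat u v) (line v)) (projline - {line v}) = Gamma v u"
proof -
  have b': "is_basis2 v u" using b det2_swap is_basis2_iff_det2 by (metis neg_equal_0_iff_equal)
  have v_in: "line v \<in> fst (Gamma_hat u v)"
    using projline_eq_chart[OF b] chart_0[of u v] by (auto simp: fst_Gamma_hat)
  have sym: "adj (Gamma_hat u v) x y \<Longrightarrow> adj (Gamma_hat u v) y x" for x y
    using GammaAdj_sym[OF q] by (simp add: adj_Gamma_hat[OF b])
  show "\<not> adj (localize (Gamma_hat u v) (line v)) (line v) y"
    by (rule localize_isolated[OF v_in sym])
  have "adj (localize (Gamma_hat u v) (line v)) (chart v u g) (chart v u d) \<longleftrightarrow> qchar (g - d) = 1"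
    for g d
  proof (cases "g = d")
    case False
    then have "chart v u g \<noteq> chart v u d" using chart_inject[OF b'] by blast
    moreover have "chart v u g \<in> projline" "chart v u d \<in> projline"
      using projline_eq_chart[OF b'] by auto
    ultimately show ?thesis
      using switch_sign_Gamma_hat[OF q b False]
      by (simp add: adj_localize[OF v_in sym] switch_at_def fst_Gamma_hat)
  qed (simp add: adj_localize[OF v_in sym] switch_at_def)
  then show "induced (localize (Gamma_hat u v) (line v)) (projline - {line v}) = Gamma v u"
    unfolding induced_def Gamma_def Xu_def[symmetric] Xu_eq_range_chart[OF b']
    by (auto simp: fun_eq_iff GammaAdj_iff_chart)
qed

section \<open>Change of basis\<close>

lemma is_basis2_matrix_vector_mult:
  "is_basis2 u v \<Longrightarrow> invertible (A::'a::field ^ 2 ^ 2) \<Longrightarrow> is_basis2 (A *v u) (A *v v)"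
  by (simp add: is_basis2_iff_det2 det2_matrix_vector_mult invertible_det_nz)

lemma graph_image_proj_act_Gamma:
  assumes b: "is_basis2 (u::'a::field ^ 2) v" and A: "invertible A"
  shows "graph_image (proj_act A) (Gamma u v) = Gamma (A *v u) (A *v v)"
proof -
  have b': "is_basis2 (A *v u) (A *v v)" by (rule is_basis2_matrix_vector_mult[OF b A])
  have "proj_act A ` Xu u = Xu (A *v u)"
    unfolding Xu_eq_range_chart[OF b] Xu_eq_range_chart[OF b']
    by (simp add: image_comp comp_def proj_act_chart)
  moreover have "(\<exists>x y. P = proj_act A x \<and> Q = proj_act A y \<and> adj (Gamma u v) x y)
      \<longleftrightarrow> GammaAdj (A *v u) (A *v v) P Q" for P Q
    unfolding adj_Gamma[OF b] GammaAdj_iff_chart by (metis proj_act_chart)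
  ultimately show ?thesis by (simp add: graph_image_def fst_Gamma Gamma_def)
qed

lemma GammaAdj_rescale:
  assumes odd: "odd CARD('a::{field,finite})" and b: "is_basis2 (u::'a ^ 2) v"
    and l: "l \<noteq> 0" and n: "n \<noteq> 0"
  shows "GammaAdj (l *s u) (m *s u + n *s v) P Q \<longleftrightarrow>
         (\<exists>a c. P = chart u v a \<and> Q = chart u v c \<and> qchar (a - c) * qchar (l * n) = 1)"
proof -
  let ?s = "qchar (l * n)" and ?chart' = "chart (l *s u) (m *s u + n *s v)"
  have sq: "?s * ?s = 1" using l n by (simp add: qchar_times_self)
  \<comment> \<open>the two charts differ by the affine substitution \<open>a = (x l + m) / n\<close>\<close>
  have rel: "qchar ((x * l + m) / n - (y * l + m) / n) = qchar (x - y) * ?s" for x y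
  proof -
    have "(x * l + m) / n - (y * l + m) / n = (x - y) * (l / n)" using n by (simp add: field_simps)
    then show ?thesis by (simp add: qchar_mult[OF odd] qchar_divide[OF odd])
  qed
  have inv: "a = ((a * n - m) / l * l + m) / n" for a using l n by (simp add: field_simps)
  show ?thesis
  proof
    assume "GammaAdj (l *s u) (m *s u + n *s v) P Q"
    then obtain x y where xy: "P = ?chart' x" "Q = ?chart' y" "qchar (x - y) = 1"
      unfolding GammaAdj_iff_chart by blast
    then have "P = chart u v ((x * l + m) / n)" "Q = chart u v ((y * l + m) / n)"
      by (simp_all add: chart_rescale[OF n])
    moreover have "qchar ((x * l + m) / n - (y * l + m) / n) * ?s = 1"
      using rel[of x y] sq xy(3) by simp
    ultimately show "\<exists>a c. P = chart u v a \<and> Q = chart u v c \<and> qchar (a - c) * ?s = 1"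
      by blast
  next
    assume "\<exists>a c. P = chart u v a \<and> Q = chart u v c \<and> qchar (a - c) * ?s = 1"
    then obtain a c where ac: "P = chart u v a" "Q = chart u v c" "qchar (a - c) * ?s = 1" by blast
    define x y where "x = (a * n - m) / l" and "y = (c * n - m) / l"
    have "P = ?chart' x" "Q = ?chart' y"
      unfolding ac(1,2) x_def y_def chart_rescale[OF n] by (simp_all only: flip: inv)
    moreover have "qchar (a - c) = qchar (x - y) * ?s"
      using rel[of x y] unfolding x_def y_def by (simp only: flip: inv)
    then have "qchar (x - y) * (?s * ?s) = 1" using ac(3) by (simp add: mult.assoc)
    then have "qchar (x - y) = 1" using sq by simp
    ultimately show "GammaAdj (l *s u) (m *s u + n *s v) P Q"
      unfolding GammaAdj_iff_chart by blast
  qed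
qed

lemma complement_Gamma_iff_chart:
  assumes b: "is_basis2 u v"
  shows "snd (complement (Gamma u v)) P Q \<longleftrightarrow>
         (\<exists>a c. P = chart u v a \<and> Q = chart u v c \<and> qchar (a - c) = -1)"
proof -
  have "snd (complement (Gamma u v)) P Q \<longleftrightarrow> P \<in> Xu u \<and> Q \<in> Xu u \<and> P \<noteq> Q \<and> \<not> GammaAdj u v P Q"
    by (simp add: complement_def fst_Gamma adj_Gamma[OF b])
  also have "\<dots> \<longleftrightarrow> (\<exists>a c. P = chart u v a \<and> Q = chart u v c \<and> qchar (a - c) = -1)"
  proof
    assume "P \<in> Xu u \<and> Q \<in> Xu u \<and> P \<noteq> Q \<and> \<not> GammaAdj u v P Q"
    moreover obtain a c where "P = chart u v a" "Q = chart u v c"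
      using calculation Xu_eq_range_chart[OF b] by auto
    ultimately show "\<exists>a c. P = chart u v a \<and> Q = chart u v c \<and> qchar (a - c) = -1"
      using qchar_cases[of "a - c"] by (auto simp: GammaAdj_chart[OF b])
  next
    assume "\<exists>a c. P = chart u v a \<and> Q = chart u v c \<and> qchar (a - c) = -1"
    then obtain a c where ac: "P = chart u v a" "Q = chart u v c" "qchar (a - c) = -1" by blast
    then have "P \<noteq> Q" using chart_inject[OF b, of a c] by auto
    then show "P \<in> Xu u \<and> Q \<in> Xu u \<and> P \<noteq> Q \<and> \<not> GammaAdj u v P Q"
      using ac Xu_eq_range_chart[OF b] by (simp add: GammaAdj_chart[OF b])
  qed
  finally show ?thesis .
qed

lemma Gamma_same_line:
  assumes odd: "odd CARD('a::{field,finite})" and b: "is_basis2 (u::'a ^ 2) v"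
    and b': "is_basis2 u' v'" and l: "line u' = line u"
  shows "Gamma u' v' = (if qchar (det2 u' v') = qchar (det2 u v) then Gamma u v
                        else complement (Gamma u v))"
proof -
  obtain l where u': "u' = l *s u" using line_eq_imp_scale[OF l[symmetric]] by blast
  obtain m n where v': "v' = m *s u + n *s v" using is_basis2_obtain[OF b] by blast
  have "det2 u' v' = (l * n) * det2 u v"
    using det2_lincomb[of l u 0 v m n] by (simp add: u' v')
  moreover have "det2 u' v' \<noteq> 0" "det2 u v \<noteq> 0" using b b' is_basis2_iff_det2 by blast+
  ultimately have ln: "l \<noteq> 0" "n \<noteq> 0"
    and qdet: "qchar (det2 u' v') = qchar (l * n) * qchar (det2 u v)"
    by (auto simp: qchar_mult[OF odd])
  have X: "Xu u' = Xu u" using l by (simp add: Xu_def)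
  have adj': "GammaAdj u' v' P Q \<longleftrightarrow>
      (\<exists>a c. P = chart u v a \<and> Q = chart u v c \<and> qchar (a - c) * qchar (l * n) = 1)" for P Q
    unfolding u' v' by (rule GammaAdj_rescale[OF odd b ln])
  show ?thesis
  proof (cases "qchar (l * n) = 1")
    case True
    then have "GammaAdj u' v' = GammaAdj u v" by (simp add: fun_eq_iff adj' GammaAdj_iff_chart[of u v])
    then show ?thesis using True qdet by (simp add: Gamma_def X)
  next
    case False
    then have minus: "qchar (l * n) = -1" using qchar_cases[of "l * n"] ln by auto
    moreover have "qchar (det2 u v) \<noteq> 0" using \<open>det2 u v \<noteq> 0\<close> by simp
    ultimately have "qchar (det2 u' v') \<noteq> qchar (det2 u v)" using qdet by simp
    moreover have "GammaAdj u' v' = snd (complement (Gamma u v))"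
      using minus by (simp add: fun_eq_iff adj' complement_Gamma_iff_chart[OF b])
    moreover have "fst (complement (Gamma u v)) = Xu u'" by (simp add: complement_def fst_Gamma X)
    ultimately show ?thesis by (metis Gamma_def prod.collapse)
  qed
qed

lemma Gamma_proj_act_stabilizer:
  assumes odd: "odd CARD('a::{field,finite})" and b: "is_basis2 (u::'a ^ 2) v"
    and A: "invertible A" and stab: "proj_act A (line u) = line u"
  shows "Gamma (A *v u) (A *v v) = (if \<exists>c. det A = c ^ 2 then Gamma u v else complement (Gamma u v))"
proof -
  have "det A \<noteq> 0" using A invertible_det_nz by blast
  then have "qchar (det2 (A *v u) (A *v v)) = qchar (det2 u v) \<longleftrightarrow> (\<exists>c. det A = c ^ 2)"
    using qchar_cases[of "det2 u v"] b
    by (auto simp: det2_matrix_vector_mult qchar_mult[OF odd] is_basis2_iff_det2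
        simp flip: qchar_eq_1_iff_square)
  then show ?thesis
    using Gamma_same_line[OF odd b is_basis2_matrix_vector_mult[OF b A]] stab
    by (simp add: proj_act_line)
qed

section \<open>The two \<open>SL\<^sub>2\<close>-orbits\<close>

definition Gamma_family :: "int \<Rightarrow> ('a::field ^ 2) set graph set" where
  "Gamma_family e = {Gamma u v | u v. is_basis2 u v \<and> qchar (det2 u v) = e}"

lemma SL2_orbit_Gamma:
  assumes odd: "odd CARD('a::{field,finite})" and b: "is_basis2 (u::'a ^ 2) v"
  shows "SL2_orbit (Gamma u v) = Gamma_family (qchar (det2 u v))"
proof (intro set_eqI iffI)
  fix G :: "('a ^ 2) set graph" assume "G \<in> SL2_orbit (Gamma u v)"
  then obtain A where A: "G = graph_image (proj_act A) (Gamma u v)" "det A = 1"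
    unfolding SL2_orbit_def SL2_def by blast
  then have "invertible A" by (simp add: invertible_det_nz)
  then have "G = Gamma (A *v u) (A *v v)" "is_basis2 (A *v u) (A *v v)"
    using A(1) graph_image_proj_act_Gamma[OF b] is_basis2_matrix_vector_mult[OF b] by auto
  moreover have "det2 (A *v u) (A *v v) = det2 u v" using A(2) by (simp add: det2_matrix_vector_mult)
  ultimately show "G \<in> Gamma_family (qchar (det2 u v))"
    unfolding Gamma_family_def mem_Collect_eq by (intro exI[of _ "A *v u"] exI[of _ "A *v v"]) simp
next
  fix G :: "('a ^ 2) set graph" assume "G \<in> Gamma_family (qchar (det2 u v))"
  then obtain u' v' :: "'a ^ 2"
    where G: "G = Gamma u' v'" "is_basis2 u' v'" "qchar (det2 u' v') = qchar (det2 u v)"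
    unfolding Gamma_family_def by blast
  have d: "det2 u v \<noteq> 0" "det2 u' v' \<noteq> 0" using b G(2) is_basis2_iff_det2 by blast+
  \<comment> \<open>rescaling \<open>v'\<close> by the square \<open>c\<close> makes the determinants equal without changing the graph\<close>
  define c where "c = det2 u v / det2 u' v'"
  have "det2 u' (c *s v') = c * det2 u' v'" by (simp add: det2_def algebra_simps)
  then have det_c: "det2 u' (c *s v') = det2 u v" using d by (simp add: c_def)
  have bc: "is_basis2 u' (c *s v')" using det_c d by (simp add: is_basis2_iff_det2)
  have "Gamma u' (c *s v') = Gamma u' v'"
    using Gamma_same_line[OF odd G(2) bc refl] det_c G(3) by simp
  obtain A :: "'a ^ 2 ^ 2" where A: "A *v u = u'" "A *v v = c *s v'"
    using exists_matrix_mapping_basis[OF b] by blast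
  have "det A = 1" using det2_matrix_vector_mult[of A u v] d det_c by (simp add: A)
  then have "G = graph_image (proj_act A) (Gamma u v) \<and> A \<in> SL2"
    using graph_image_proj_act_Gamma[OF b] A G(1) \<open>Gamma u' (c *s v') = Gamma u' v'\<close>
    by (simp add: SL2_def invertible_det_nz)
  then show "G \<in> SL2_orbit (Gamma u v)" unfolding SL2_orbit_def by blast
qed

lemma Gamma_neq_complement:
  assumes "is_basis2 u v"
  shows "Gamma u v \<noteq> complement (Gamma u v)"
proof
  assume eq: "Gamma u v = complement (Gamma u v)"
  have edge: "adj (Gamma u v) (chart u v 1) (chart u v 0)"
    by (simp add: adj_Gamma[OF assms] GammaAdj_chart[OF assms])
  then have "\<not> snd (complement (Gamma u v)) (chart u v 1) (chart u v 0)"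
    unfolding complement_def snd_conv by blast
  moreover have "snd (Gamma u v) (chart u v 1) (chart u v 0)" using edge unfolding adj_def by blast
  ultimately show False using eq by simp
qed

lemma Xu_eq_imp_line_eq:
  assumes "is_basis2 u v" "is_basis2 u' v'" "Xu u' = Xu u"
  shows "line u' = line u"
proof -
  have "line u \<in> projline" using projline_eq_chart[OF assms(1)] by blast
  then show ?thesis using assms(3) unfolding Xu_def by blast
qed

lemma Gamma_family_distinct:
  assumes odd: "odd CARD('a::{field,finite})"
  shows "Gamma_family 1 \<noteq> (Gamma_family (-1) :: ('a ^ 2) set graph set)"
proof
  define e1 e2 :: "'a ^ 2" where "e1 = vector [1, 0]" and "e2 = vector [0, 1]"
  have det: "det2 e1 e2 = 1" by (simp add: e1_def e2_def det2_def)
  then have b: "is_basis2 e1 e2" by (simp add: is_basis2_iff_det2)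
  assume "Gamma_family 1 = (Gamma_family (-1) :: ('a ^ 2) set graph set)"
  moreover have "qchar (det2 e1 e2) = 1" using det by simp
  then have "Gamma e1 e2 \<in> Gamma_family 1" using b unfolding Gamma_family_def by blast
  ultimately have "Gamma e1 e2 \<in> Gamma_family (-1)" by simp
  then obtain u' v' where G: "Gamma e1 e2 = Gamma u' v'" "is_basis2 u' v'" "qchar (det2 u' v') = -1"
    unfolding Gamma_family_def by blast
  then have "line u' = line e1" using Xu_eq_imp_line_eq[OF b] by (metis fst_Gamma)
  then have "Gamma u' v' = complement (Gamma e1 e2)"
    using Gamma_same_line[OF odd b G(2)] G(3) det by simp
  then show False using Gamma_neq_complement[OF b] G(1) by simp
qed

lemma card_SL2_orbits_Gamma:
  assumes odd: "odd CARD('a::{field,finite})"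
  shows "card {SL2_orbit G | G. G \<in> {Gamma u v | u v :: 'a ^ 2. is_basis2 u v}} = 2"
proof -
  define e1 e2 :: "'a ^ 2" where "e1 = vector [1, 0]" and "e2 = vector [0, 1]"
  obtain n :: 'a where n: "qchar n = -1" using exists_nonsquare[OF odd] by blast
  have det: "det2 e1 e2 = 1" "det2 e1 (n *s e2) = n" by (simp_all add: e1_def e2_def det2_def)
  then have b: "is_basis2 e1 e2" "is_basis2 e1 (n *s e2)" using n by (auto simp: is_basis2_iff_det2)
  have "{SL2_orbit G | G. G \<in> {Gamma u v | u v :: 'a ^ 2. is_basis2 u v}}
      = {Gamma_family 1, Gamma_family (-1)}"
  proof (intro set_eqI iffI)
    fix orb assume "orb \<in> {SL2_orbit G | G. G \<in> {Gamma u v | u v :: 'a ^ 2. is_basis2 u v}}"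
    then obtain u v :: "'a ^ 2" where "orb = SL2_orbit (Gamma u v)" "is_basis2 u v" by blast
    moreover from this have "qchar (det2 u v) = 1 \<or> qchar (det2 u v) = -1"
      using qchar_cases is_basis2_iff_det2 by blast
    ultimately show "orb \<in> {Gamma_family 1, Gamma_family (-1)}"
      using SL2_orbit_Gamma[OF odd] by (elim disjE) simp_all
  next
    fix orb assume "orb \<in> {Gamma_family 1, Gamma_family (-1) :: ('a ^ 2) set graph set}"
    then have "orb = SL2_orbit (Gamma e1 e2) \<or> orb = SL2_orbit (Gamma e1 (n *s e2))"
      using SL2_orbit_Gamma[OF odd b(1)] SL2_orbit_Gamma[OF odd b(2)] det n by auto
    then show "orb \<in> {SL2_orbit G | G. G \<in> {Gamma u v | u v :: 'a ^ 2. is_basis2 u v}}"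
      using b by blast
  qed
  then show ?thesis using Gamma_family_distinct[OF odd] by simp
qed

lemma delete_localize_Gamma_hat_at_u:
  assumes q: "CARD('a::{field,finite}) mod 4 = 1" and b: "is_basis2 (u::'a ^ 2) v"
  shows "delete_vertex (localize (Gamma_hat u v) (line u)) (line u) = Gamma u v"
proof -
  have u_in: "line u \<in> fst (Gamma_hat u v)" by (simp add: fst_Gamma_hat projline_eq_chart[OF b])
  have sym: "adj (Gamma_hat u v) x y \<Longrightarrow> adj (Gamma_hat u v) y x" for x y
    using GammaAdj_sym[OF q] by (simp add: adj_Gamma_hat[OF b])
  \<comment> \<open>\<open>\<langle>u\<rangle>\<close> is already isolated, so localizing there changes nothing\<close>
  have "switch_at (Gamma_hat u v) (line u) x y \<longleftrightarrow> x \<noteq> y \<and> x \<in> projline \<and> y \<in> projline \<and> GammaAdj u v x y"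
    for x y
    unfolding switch_at_def fst_Gamma_hat eps_Gamma_hat_line[OF b]
    by (cases "x = y") (simp_all add: eps_eq_minus_1_iff adj_Gamma_hat[OF b])
  then have "adj (localize (Gamma_hat u v) (line u)) x y \<longleftrightarrow> GammaAdj u v x y" for x y
    using GammaAdj_imp_Xu[OF b, of x y] by (auto simp: adj_localize[OF u_in sym] Xu_def)
  moreover have "GammaAdj u v x y \<Longrightarrow> x \<in> Xu u \<and> y \<in> Xu u" for x y
    using GammaAdj_imp_Xu[OF b] by blast
  ultimately show ?thesis
    unfolding delete_vertex_def induced_def fst_localize fst_Gamma_hat Xu_def[symmetric] Gamma_def
    by (auto simp: fun_eq_iff)
qed

lemma Gamma_hat_shift:
  assumes odd: "odd CARD('a::{field,finite})" and b: "is_basis2 (u::'a ^ 2) v"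
  shows "Gamma_hat u (a *s u + v) = Gamma_hat u v"
proof -
  have det: "det2 u (a *s u + v) = det2 u v" by (simp add: det2_def algebra_simps)
  then have "is_basis2 u (a *s u + v)" using b by (simp add: is_basis2_iff_det2)
  then have "Gamma u (a *s u + v) = Gamma u v" using Gamma_same_line[OF odd b] det by simp
  then show ?thesis by (simp add: Gamma_def Gamma_hat_def)
qed

lemma delete_localize_Gamma_hat:
  assumes q: "CARD('a::{field,finite}) mod 4 = 1" and b: "is_basis2 (u::'a ^ 2) v"
    and z: "z \<in> projline"
  obtains u' v' where "is_basis2 u' v'" "line u' = z" "qchar (det2 u' v') = qchar (det2 u v)"
    "delete_vertex (localize (Gamma_hat u v) z) z = Gamma u' v'"
proof (cases "z = line u")
  case True
  then show ?thesis using that[OF b] delete_localize_Gamma_hat_at_u[OF q b] by simp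
next
  case False
  have odd: "odd CARD('a)" using q by presburger
  obtain a where "z = chart u v a" using assms(3) False projline_eq_chart[OF b] by auto
  then have z: "z = line (a *s u + v)" by (simp add: chart_def)
  have det: "det2 u (a *s u + v) = det2 u v" by (simp add: det2_def algebra_simps)
  then have b2: "is_basis2 u (a *s u + v)" using b by (simp add: is_basis2_iff_det2)
  \<comment> \<open>localizing at \<open>\<langle>a u + v\<rangle>\<close> swaps the roles of the basis vectors \<open>u\<close> and \<open>a u + v\<close>\<close>
  have "delete_vertex (localize (Gamma_hat u v) z) z = Gamma (a *s u + v) u"
    using localize_Gamma_hat_at_v(2)[OF q b2]
    by (simp add: delete_vertex_def fst_localize fst_Gamma_hat z Gamma_hat_shift[OF odd b])
  moreover have "is_basis2 (a *s u + v) u"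
    using b2 det2_swap[of u "a *s u + v"] by (simp add: is_basis2_iff_det2)
  moreover have "det2 (a *s u + v) u = - det2 u v" by (simp only: det2_swap[of "a *s u + v" u] det)
  then have "qchar (det2 (a *s u + v) u) = qchar (det2 u v)" by (simp add: qchar_uminus[OF q])
  ultimately show ?thesis using that z by blast
qed

lemma SL2_orbit_eq_localizations:
  assumes q: "CARD('a::{field,finite}) mod 4 = 1" and b: "is_basis2 (u::'a ^ 2) v"
  shows "SL2_orbit (Gamma u v) = {delete_vertex (localize (Gamma_hat u v) z) z | z. z \<in> projline}"
proof -
  have odd: "odd CARD('a)" using q by presburger
  have "Gamma_family (qchar (det2 u v)) = {delete_vertex (localize (Gamma_hat u v) z) z | z. z \<in> projline}"
  proof (intro set_eqI iffI)
    fix G :: "('a ^ 2) set graph" assume "G \<in> Gamma_family (qchar (det2 u v))"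
    then obtain u' v' where G: "G = Gamma u' v'" "is_basis2 u' v'" "qchar (det2 u' v') = qchar (det2 u v)"
      unfolding Gamma_family_def by blast
    have z: "line u' \<in> projline" using projline_eq_chart[OF G(2)] by blast
    obtain u'' v'' where b'': "is_basis2 u'' v''" and l: "line u'' = line u'"
      and det: "qchar (det2 u'' v'') = qchar (det2 u v)"
      and loc: "delete_vertex (localize (Gamma_hat u v) (line u')) (line u') = Gamma u'' v''"
      using delete_localize_Gamma_hat[OF q b z] by blast
    have "Gamma u'' v'' = G" using Gamma_same_line[OF odd G(2) b'' l] G(1,3) det by simp
    then show "G \<in> {delete_vertex (localize (Gamma_hat u v) z) z | z. z \<in> projline}"
      unfolding mem_Collect_eq using loc z by metis
  next
    fix G :: "('a ^ 2) set graph"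
    assume "G \<in> {delete_vertex (localize (Gamma_hat u v) z) z | z. z \<in> projline}"
    then obtain z where G: "G = delete_vertex (localize (Gamma_hat u v) z) z" and z: "z \<in> projline"
      by blast
    obtain u' v' where "is_basis2 u' v'" "qchar (det2 u' v') = qchar (det2 u v)"
      "delete_vertex (localize (Gamma_hat u v) z) z = Gamma u' v'"
      using delete_localize_Gamma_hat[OF q b z] by blast
    then show "G \<in> Gamma_family (qchar (det2 u v))" unfolding Gamma_family_def G by blast
  qed
  then show ?thesis using SL2_orbit_Gamma[OF odd b] by simp
qed

theorem theorem4:
  fixes t :: nat and u v :: "'a::{field,finite} ^ 2"
  assumes q: "CARD('a) = 4 * t + 5"
    and uv: "is_basis2 u v"
  shows
    "(diameter (Gamma u v) = 2
      \<and> (\<forall>x\<in>Xu u. card (nbrs (Gamma u v) x) = (CARD('a) - 1) div 2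
                   \<and> card (nbrs (Gamma u v) x) = 2 * (t + 1))
      \<and> (\<forall>x\<in>Xu u. \<forall>y\<in>Xu u. adj (Gamma u v) x y
             \<longrightarrow> card (common_nbrs (Gamma u v) x y) = t)
      \<and> (\<forall>x\<in>Xu u. \<forall>y\<in>Xu u. graph_dist (Gamma u v) x y = 2
             \<longrightarrow> card (common_nbrs (Gamma u v) x y) = t + 1))
   \<and> ((\<forall>y. \<not> adj (localize (Gamma_hat u v) (line v)) (line v) y)
      \<and> induced (localize (Gamma_hat u v) (line v)) (projline - {line v}) = Gamma v u)
   \<and> (\<forall>\<phi>\<in>GL2. graph_image (proj_act \<phi>) (Gamma u v) = Gamma (\<phi> *v u) (\<phi> *v v))
   \<and> (\<forall>\<phi>\<in>GL2. proj_act \<phi> (line u) = line u \<longrightarrow>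
        (if \<exists>c. det \<phi> = c ^ 2 then Gamma (\<phi> *v u) (\<phi> *v v) = Gamma u v
         else Gamma (\<phi> *v u) (\<phi> *v v) = complement (Gamma u v)))
   \<and> (card {SL2_orbit G | G. G \<in> {Gamma u' v' | u' v' :: 'a ^ 2. is_basis2 u' v'}} = 2
      \<and> SL2_orbit (Gamma u v) =
          {delete_vertex (localize (Gamma_hat u v) z) z | z. z \<in> projline})"
proof -
  have q4: "CARD('a) mod 4 = 1" and odd: "odd CARD('a)" using q by presburger+
  have "\<forall>\<phi>\<in>GL2. graph_image (proj_act \<phi>) (Gamma u v) = Gamma (\<phi> *v u) (\<phi> *v v)"
    using graph_image_proj_act_Gamma[OF uv] by (simp add: GL2_def)
  moreover have "\<forall>\<phi>\<in>GL2. proj_act \<phi> (line u) = line u \<longrightarrow>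
        (if \<exists>c. det \<phi> = c ^ 2 then Gamma (\<phi> *v u) (\<phi> *v v) = Gamma u v
         else Gamma (\<phi> *v u) (\<phi> *v v) = complement (Gamma u v))"
    using Gamma_proj_act_stabilizer[OF odd uv] by (simp add: GL2_def)
  ultimately show ?thesis
    using Gamma_parameters[OF q uv] localize_Gamma_hat_at_v[OF q4 uv]
      card_SL2_orbits_Gamma[OF odd] SL2_orbit_eq_localizations[OF q4 uv]
    by blast
qed

end
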